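(* Fix any constant $c > 0$. There exists an adaptive algorithm that, given $n$ items among which an unknown number $k$ are defective and accessed through noisy group tests as in the context, outputs $\bar k$ satisfying $\frac{\bar k}{2} \le k \le \bar k$ with probability $1 - O(n^{-c})$, using an average of $O(\log k \cdot \log n)$ tests. Moreover, for any fixed $\epsilon \in (0,1)$ there exists such an algorithm outputting $\bar k$ with $(1-\epsilon)\bar k \le k \le \bar k$ with probability $1-O(n^{-c})$, using an average of $O(\log k\cdot\log n)$ tests, where the implicit constant in the number of tests depends on $\epsilon$.
   Context: Noisy group test: a test is a subset (pool) of the items, and its outcome is $Y = U \oplus Z$, where $U=1$ if the pool contains at least one defective and $U=0$ otherwise, $Z\sim\mathrm{Bernoulli}(\rho)$ for a fixed $\rho \in (0,\frac12)$ independently across tests, and $\oplus$ is addition modulo 2. Tests may be chosen adaptively (depending on previous outcomes) and the number of tests may be random. Asymptotics are as $n\to\infty$. *)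

theory Defs
  imports "HOL-Probability.Probability"
begin

text \<open>Items are 0..n-1. A history records the pools tested so far with their
 (noisy) outcomes. A (possibly randomized) adaptive algorithm is a behavioural
 strategy: given the history it either outputs an estimate (Inl) or chooses the
 next pool (Inr), at random according to a pmf.\<close>

type_synonym gt_hist = "(nat set \<times> bool) list"
type_synonym gt_algo = "gt_hist \<Rightarrow> (nat + nat set) pmf"

text \<open>One step of the interaction. State: history and (optional) output.
 Outcome of testing pool S is U xor Z with U = (S meets K) and Z ~ Bernoulli(rho).\<close>

definition gt_step :: "real \<Rightarrow> nat set \<Rightarrow> gt_algo \<Rightarrow> gt_hist \<times> nat option
    \<Rightarrow> (gt_hist \<times> nat option) pmf" where
  "gt_step \<rho> K A s = (case snd s of
      Some _ \<Rightarrow> return_pmf s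
    | None \<Rightarrow> bind_pmf (A (fst s)) (\<lambda>d. case d of
        Inl kb \<Rightarrow> return_pmf (fst s, Some kb)
      | Inr S \<Rightarrow> map_pmf (\<lambda>z. (fst s @ [(S, (S \<inter> K \<noteq> {}) \<noteq> z)], None))
                    (bernoulli_pmf \<rho>)))"

definition gt_run :: "real \<Rightarrow> nat set \<Rightarrow> gt_algo \<Rightarrow> nat \<Rightarrow> (gt_hist \<times> nat option) pmf" where
  "gt_run \<rho> K A t = ((\<lambda>p. bind_pmf p (gt_step \<rho> K A)) ^^ t) (return_pmf ([], None))"

definition gt_success_prob :: "real \<Rightarrow> nat set \<Rightarrow> gt_algo \<Rightarrow> (nat \<Rightarrow> bool) \<Rightarrow> real" where
  "gt_success_prob \<rho> K A P =
     (SUP t. measure_pmf.prob (gt_run \<rho> K A t) {s. \<exists>kb. snd s = Some kb \<and> P kb})"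

text \<open>Expected number of tests performed within the first t steps; the expected
 total number of tests is the supremum over t (monotone convergence).\<close>
definition gt_tests_upto :: "real \<Rightarrow> nat set \<Rightarrow> gt_algo \<Rightarrow> nat \<Rightarrow> real" where
  "gt_tests_upto \<rho> K A t =
     measure_pmf.expectation (gt_run \<rho> K A t) (\<lambda>s. real (length (fst s)))"

end

theory Submission
  imports Defs
begin

(* Stage j runs M = O(log n) tests on random pools containing each item independently with
   probability 1 - 2 powr (-1 / r^j).  Such a pool meets the k defectives with probability
   1 - 2 powr (-k / r^j), so the rate of positive outcomes is at least tau + g while r^j < k and
   at most tau - g once k <= alpha * r^j.  The search stops at the first stage whose fraction of
   positive outcomes is below tau and outputs floor (r^j); since r = alpha / (1 - eps), any stage
   not later than the first one with k <= alpha * r^j yields an admissible estimate when it stops.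
   By Hoeffding's inequality a stage misbehaves with probability at most exp (-2 M g^2), which is
   at most n powr -(c + 1) for M ~ log n, and a union bound over the O(n) stages gives the success
   probability.  The expected number of tests is at most M times the number O(log k) of stages up
   to the first good one, plus the failure probability times the worst case. *)

section \<open>Expectations over probability mass functions\<close>

lemma bernoulli_pmf_pmf_True: "bernoulli_pmf (pmf p True) = p"
proof (rule pmf_eqI)
  fix b :: bool
  show "pmf (bernoulli_pmf (pmf p True)) b = pmf p b"
    by (cases b) (simp_all add: pmf_le_1 pmf_False_conv_True)
qed

lemma measure_pmf_prob_bind:
  "measure_pmf.prob (bind_pmf p q) A = measure_pmf.expectation p (\<lambda>x. measure_pmf.prob (q x) A)"
  unfolding measure_pmf_bind
  by (rule measure_pmf.measure_bind[where N="count_space UNIV"]) (auto simp: measure_subprob)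

lemma expectation_bind_pmf:
  fixes f :: "'b \<Rightarrow> real"
  assumes "\<And>y. y \<in> set_pmf (bind_pmf p q) \<Longrightarrow> \<bar>f y\<bar> \<le> B"
  shows "measure_pmf.expectation (bind_pmf p q) f =
           measure_pmf.expectation p (\<lambda>x. measure_pmf.expectation (q x) f)"
proof -
  define f' where "f' y = max (- B) (min (f y) B)" for y
  have on_support: "measure_pmf.expectation r f' = measure_pmf.expectation r f"
    if "set_pmf r \<subseteq> set_pmf (bind_pmf p q)" for r
  proof (intro integral_cong_AE AE_pmfI)
    fix y assume "y \<in> set_pmf r"
    then have "\<bar>f y\<bar> \<le> B" using that assms by blast
    then show "f' y = f y" by (auto simp: f'_def)
  qed simp_all
  have "measure_pmf.expectation (bind_pmf p q) f = measure_pmf.expectation (bind_pmf p q) f'"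
    by (simp add: on_support)
  also have "\<dots> = measure_pmf.expectation p (\<lambda>x. measure_pmf.expectation (q x) f')"
    unfolding measure_pmf_bind
    by (rule integral_bind[where K="count_space UNIV" and B="\<bar>B\<bar>" and B'=1])
       (auto simp: f'_def measure_subprob measure_pmf.emeasure_space_1)
  also have "\<dots> = measure_pmf.expectation p (\<lambda>x. measure_pmf.expectation (q x) f)"
    by (intro integral_cong_AE AE_pmfI on_support) auto
  finally show ?thesis .
qed

lemma funpow_bind_pmf:
  fixes f :: "'a \<Rightarrow> 'a pmf"
  shows "((\<lambda>q. bind_pmf q f) ^^ t) p = bind_pmf p (\<lambda>s. ((\<lambda>q. bind_pmf q f) ^^ t) (return_pmf s))"
proof (induction t arbitrary: p)
  case 0
  show ?case by (simp add: bind_return_pmf' id_def)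
next
  case (Suc t)
  have step: "((\<lambda>q. bind_pmf q f) ^^ Suc t) r = ((\<lambda>q. bind_pmf q f) ^^ t) (bind_pmf r f)" for r
    by (simp add: funpow_Suc_right del: funpow.simps)
  show ?case
    by (simp add: step Suc[of "bind_pmf p f"] Suc[of "f _"] bind_assoc_pmf bind_return_pmf
        del: funpow.simps)
qed

lemma finite_set_replicate_pmf:
  assumes "finite (set_pmf p)"
  shows "finite (set_pmf (replicate_pmf n p))"
  unfolding set_replicate_pmf
  by (rule finite_subset[OF _ finite_lists_length_eq[OF assms, of n]]) (auto simp: in_lists_conv_set)

lemma pmf_expectation_ge_minus_prob:
  fixes f :: "'a \<Rightarrow> real"
  assumes "finite (set_pmf p)" "\<And>x. x \<in> set_pmf p \<Longrightarrow> a - indicator A x \<le> f x"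
  shows "a - measure_pmf.prob p A \<le> measure_pmf.expectation p f"
proof -
  have "a - measure_pmf.prob p A = measure_pmf.expectation p (\<lambda>x. a - indicator A x)"
    using assms(1) by (simp add: Bochner_Integration.integral_diff integrable_measure_pmf_finite)
  also have "\<dots> \<le> measure_pmf.expectation p f"
    using assms by (intro integral_mono_AE AE_pmfI integrable_measure_pmf_finite) auto
  finally show ?thesis .
qed

lemma pmf_expectation_le_plus_prob:
  fixes f :: "'a \<Rightarrow> real"
  assumes "finite (set_pmf p)" "\<And>x. x \<in> set_pmf p \<Longrightarrow> f x \<le> a + b * indicator A x"
  shows "measure_pmf.expectation p f \<le> a + b * measure_pmf.prob p A"
proof -
  have "measure_pmf.expectation p f \<le> measure_pmf.expectation p (\<lambda>x. a + b * indicator A x)"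
    using assms by (intro integral_mono_AE AE_pmfI integrable_measure_pmf_finite) auto
  also have "\<dots> = a + b * measure_pmf.prob p A"
    using assms(1) by (simp add: Bochner_Integration.integral_add integrable_measure_pmf_finite)
  finally show ?thesis .
qed

lemma pmf_expectation_le_const:
  fixes f :: "'a \<Rightarrow> real"
  assumes "finite (set_pmf p)" "\<And>x. x \<in> set_pmf p \<Longrightarrow> f x \<le> a"
  shows "measure_pmf.expectation p f \<le> a"
  using assms by (intro measure_pmf.integral_le_const AE_pmfI integrable_measure_pmf_finite) auto

lemma prob_replicate_pmf_count:
  "measure_pmf.prob (replicate_pmf M p) {b. length (filter id b) \<in> A} =
     measure_pmf.prob (binomial_pmf M (pmf p True)) A"
  by (simp add: binomial_pmf_altdef pmf_le_1 bernoulli_pmf_pmf_True vimage_def)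

section \<open>Estimators that only look at the outcomes\<close>

(* An estimator that decides from the outcome bits alone and draws the pool of a stage-j test
   from P j.  Forgetting the pools turns its run into a process on outcome sequences in which
   each stage-j outcome is an independent draw from Q j = outcome_pmf rho K (P j). *)

definition outcome_step :: "(nat \<Rightarrow> bool pmf) \<Rightarrow> (bool list \<Rightarrow> nat + nat)
    \<Rightarrow> bool list \<times> nat option \<Rightarrow> (bool list \<times> nat option) pmf" where
  "outcome_step Q d s = (case snd s of
      Some _ \<Rightarrow> return_pmf s
    | None \<Rightarrow> (case d (fst s) of
        Inl kb \<Rightarrow> return_pmf (fst s, Some kb)
      | Inr j \<Rightarrow> map_pmf (\<lambda>b. (fst s @ [b], None)) (Q j)))"

definition outcome_run :: "(nat \<Rightarrow> bool pmf) \<Rightarrow> (bool list \<Rightarrow> nat + nat)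
    \<Rightarrow> bool list \<times> nat option \<Rightarrow> nat \<Rightarrow> (bool list \<times> nat option) pmf" where
  "outcome_run Q d s t = ((\<lambda>p. bind_pmf p (outcome_step Q d)) ^^ t) (return_pmf s)"

definition forget_pools :: "gt_hist \<times> nat option \<Rightarrow> bool list \<times> nat option" where
  "forget_pools s = (map snd (fst s), snd s)"

definition pooled_algo :: "(bool list \<Rightarrow> nat + nat) \<Rightarrow> (nat \<Rightarrow> nat set pmf) \<Rightarrow> gt_algo" where
  "pooled_algo d P h = (case d (map snd h) of
      Inl kb \<Rightarrow> return_pmf (Inl kb)
    | Inr j \<Rightarrow> map_pmf Inr (P j))"

definition outcome_pmf :: "real \<Rightarrow> nat set \<Rightarrow> nat set pmf \<Rightarrow> bool pmf" where
  "outcome_pmf \<rho> K P = bind_pmf P (\<lambda>S. map_pmf (\<lambda>z. (S \<inter> K \<noteq> {}) \<noteq> z) (bernoulli_pmf \<rho>))"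

lemma forget_pools_gt_step:
  "map_pmf forget_pools (gt_step \<rho> K (pooled_algo d P) s) =
     outcome_step (\<lambda>j. outcome_pmf \<rho> K (P j)) d (forget_pools s)"
  by (cases "snd s"; cases "d (map snd (fst s))")
     (simp_all add: gt_step_def outcome_step_def forget_pools_def pooled_algo_def outcome_pmf_def
        map_bind_pmf bind_map_pmf map_pmf_comp bind_return_pmf o_def)

lemma forget_pools_gt_run:
  "map_pmf forget_pools (gt_run \<rho> K (pooled_algo d P) t) =
     outcome_run (\<lambda>j. outcome_pmf \<rho> K (P j)) d ([], None) t"
proof (induction t)
  case 0
  show ?case by (simp add: gt_run_def outcome_run_def forget_pools_def)
next
  case (Suc t)
  have "map_pmf forget_pools (gt_run \<rho> K (pooled_algo d P) (Suc t)) =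
      bind_pmf (gt_run \<rho> K (pooled_algo d P) t)
        (\<lambda>s. map_pmf forget_pools (gt_step \<rho> K (pooled_algo d P) s))"
    by (simp add: gt_run_def map_bind_pmf)
  also have "\<dots> = bind_pmf (map_pmf forget_pools (gt_run \<rho> K (pooled_algo d P) t))
      (outcome_step (\<lambda>j. outcome_pmf \<rho> K (P j)) d)"
    by (simp add: forget_pools_gt_step bind_map_pmf)
  finally show ?case
    by (simp add: Suc outcome_run_def)
qed

lemma gt_success_prob_pooled_algo_ge:
  "measure_pmf.prob (outcome_run (\<lambda>j. outcome_pmf \<rho> K (P j)) d ([], None) t)
       {s. \<exists>kb. snd s = Some kb \<and> good kb}
     \<le> gt_success_prob \<rho> K (pooled_algo d P) good"
proof -
  have "measure_pmf.prob (outcome_run (\<lambda>j. outcome_pmf \<rho> K (P j)) d ([], None) t)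
        {s. \<exists>kb. snd s = Some kb \<and> good kb}
      = measure_pmf.prob (gt_run \<rho> K (pooled_algo d P) t) {s. \<exists>kb. snd s = Some kb \<and> good kb}"
    by (simp flip: forget_pools_gt_run add: vimage_def forget_pools_def)
  also have "\<dots> \<le> gt_success_prob \<rho> K (pooled_algo d P) good"
    unfolding gt_success_prob_def by (rule cSUP_upper) (auto intro!: bdd_aboveI[where M=1])
  finally show ?thesis .
qed

lemma gt_tests_upto_pooled_algo:
  "gt_tests_upto \<rho> K (pooled_algo d P) t =
     measure_pmf.expectation (outcome_run (\<lambda>j. outcome_pmf \<rho> K (P j)) d ([], None) t)
       (\<lambda>s. real (length (fst s)))"
  unfolding gt_tests_upto_def by (simp flip: forget_pools_gt_run add: forget_pools_def)

lemma outcome_run_0 [simp]: "outcome_run Q d s 0 = return_pmf s"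
  by (simp add: outcome_run_def)

lemma outcome_run_Suc: "outcome_run Q d s (Suc t) = bind_pmf (outcome_run Q d s t) (outcome_step Q d)"
  by (simp add: outcome_run_def)

lemma outcome_run_add:
  "outcome_run Q d s (t + u) = bind_pmf (outcome_run Q d s t) (\<lambda>s'. outcome_run Q d s' u)"
  unfolding outcome_run_def by (simp only: add.commute[of t] funpow_add o_apply) (rule funpow_bind_pmf)

lemma outcome_run_halted: "outcome_run Q d (bs, Some kb) t = return_pmf (bs, Some kb)"
  by (induction t) (simp_all add: outcome_run_Suc bind_return_pmf outcome_step_def)

lemma outcome_run_output:
  assumes "d bs = Inl kb"
  shows "outcome_run Q d (bs, None) (Suc t) = return_pmf (bs, Some kb)"
  using outcome_run_add[of Q d "(bs, None)" 1 t] assms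
  by (simp add: outcome_run_Suc bind_return_pmf outcome_step_def outcome_run_halted)

lemma outcome_run_block:
  assumes "\<And>b. length b < i \<Longrightarrow> d (bs @ b) = Inr j"
  shows "outcome_run Q d (bs, None) i = map_pmf (\<lambda>b. (bs @ b, None)) (replicate_pmf i (Q j))"
  using assms
proof (induction i)
  case 0
  show ?case by simp
next
  case (Suc i)
  have "outcome_run Q d (bs, None) (Suc i) =
      bind_pmf (replicate_pmf i (Q j)) (\<lambda>b. outcome_step Q d (bs @ b, None))"
    using Suc by (simp add: outcome_run_Suc bind_map_pmf)
  also have "\<dots> = bind_pmf (replicate_pmf i (Q j)) (\<lambda>b. map_pmf (\<lambda>x. (bs @ b @ [x], None)) (Q j))"
    by (intro bind_pmf_cong) (auto simp: outcome_step_def set_replicate_pmf Suc.prems)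
  also have "\<dots> = map_pmf (\<lambda>b. (bs @ b, None)) (replicate_pmf (i + 1) (Q j))"
    unfolding replicate_pmf_distrib replicate_pmf_1
    by (simp add: map_bind_pmf bind_map_pmf bind_return_pmf bind_assoc_pmf map_pmf_def)
  finally show ?case by simp
qed

lemma outcome_run_length_le:
  assumes "\<And>bs j. d bs = Inr j \<Longrightarrow> length bs < D" "length (fst s0) \<le> D"
    and "s \<in> set_pmf (outcome_run Q d s0 t)"
  shows "length (fst s) \<le> D"
  using assms(3)
proof (induction t arbitrary: s)
  case 0
  then show ?case using assms(2) by simp
next
  case (Suc t)
  then obtain s' where s': "s' \<in> set_pmf (outcome_run Q d s0 t)" "s \<in> set_pmf (outcome_step Q d s')"
    by (auto simp: outcome_run_Suc)
  have IH: "length (fst s') \<le> D"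
    using Suc.IH s'(1) .
  show ?case
  proof (cases "snd s'")
    case None
    show ?thesis
    proof (cases "d (fst s')")
      case (Inr j)
      then have "length (fst s') < D"
        by (rule assms(1))
      with s'(2) None Inr show ?thesis
        by (auto simp: outcome_step_def)
    qed (use s'(2) None IH in \<open>auto simp: outcome_step_def\<close>)
  qed (use s'(2) IH in \<open>auto simp: outcome_step_def\<close>)
qed

lemma finite_set_outcome_run: "finite (set_pmf (outcome_run Q d s t))"
proof (induction t)
  case (Suc t)
  have "finite (set_pmf (outcome_step Q d s'))" for s'
    by (simp add: outcome_step_def split: option.split sum.split)
  with Suc show ?case by (simp add: outcome_run_Suc)
qed simp

section \<open>Staged threshold search\<close>

definition block_accepts :: "real \<Rightarrow> bool list \<Rightarrow> bool" where
  "block_accepts \<tau> b \<longleftrightarrow> real (length (filter id b)) < \<tau> * real (length b)"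

(* Stage j occupies the positions j * M ..< (j + 1) * M of the outcome sequence.  After a stage
   whose block of outcomes is accepted the search outputs out j; after stage J it gives up. *)

definition stage_rule :: "nat \<Rightarrow> nat \<Rightarrow> real \<Rightarrow> (nat \<Rightarrow> nat) \<Rightarrow> bool list \<Rightarrow> nat + nat" where
  "stage_rule M J \<tau> out bs =
     (let j = length bs div M in
      if 0 < j \<and> length bs mod M = 0 \<and> block_accepts \<tau> (drop (length bs - M) bs)
      then Inl (out (j - 1))
      else if j \<le> J then Inr j else Inl 0)"

lemma stage_rule_Nil: "stage_rule M J \<tau> out [] = Inr 0"
  by (simp add: stage_rule_def)

lemma stage_rule_inside_block:
  assumes "0 < M" "length bs = j * M" "stage_rule M J \<tau> out bs = Inr j" "length b < M"
  shows "stage_rule M J \<tau> out (bs @ b) = Inr j"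
proof (cases "b = []")
  case False
  have "(j * M + length b) div M = j" "(j * M + length b) mod M = length b"
    using assms by simp_all
  with assms False show ?thesis
    by (auto simp: stage_rule_def Let_def split: if_splits)
qed (use assms in simp)

lemma stage_rule_block_end:
  assumes "0 < M" "length bs = j * M" "length b = M"
  shows "stage_rule M J \<tau> out (bs @ b) =
     (if block_accepts \<tau> b then Inl (out j) else if Suc j \<le> J then Inr (Suc j) else Inl 0)"
proof -
  have "length (bs @ b) = Suc j * M" "drop (Suc j * M - M) (bs @ b) = b"
    using assms by simp_all
  then show ?thesis
    using assms(1) by (simp add: stage_rule_def Let_def)
qed

lemma stage_rule_Inr_length:
  assumes "0 < M" "stage_rule M J \<tau> out bs = Inr j"
  shows "length bs < Suc J * M"
proof -
  have "length bs div M \<le> J"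
    using assms(2) by (auto simp: stage_rule_def Let_def split: if_splits)
  then show ?thesis
    using assms(1) by (metis Suc_leI div_less_iff_less_mult le_less_trans lessI)
qed

lemma prob_block_accepts_eq:
  "measure_pmf.prob (replicate_pmf M p) {b. block_accepts \<tau> b = v} =
     measure_pmf.prob (binomial_pmf M (pmf p True)) {c. (real c < \<tau> * real M) = v}"
proof -
  have "measure_pmf.prob (replicate_pmf M p) {b. block_accepts \<tau> b = v} =
      measure_pmf.prob (replicate_pmf M p) {b. length (filter id b) \<in> {c. (real c < \<tau> * real M) = v}}"
    by (rule measure_prob_cong_0) (auto simp: block_accepts_def pmf_eq_0_set_pmf set_replicate_pmf)
  then show ?thesis
    using prob_replicate_pmf_count[of M p "{c. (real c < \<tau> * real M) = v}"] by simp
qed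

lemma prob_block_accepts_le:
  assumes "0 < M" "0 \<le> g" "\<tau> + g \<le> pmf p True"
  shows "measure_pmf.prob (replicate_pmf M p) {b. block_accepts \<tau> b} \<le> exp (- 2 * real M * g\<^sup>2)"
proof -
  let ?q = "pmf p True"
  have "measure_pmf.prob (replicate_pmf M p) {b. block_accepts \<tau> b} =
      measure_pmf.prob (binomial_pmf M ?q) {c. real c < \<tau> * real M}"
    using prob_block_accepts_eq[of M p \<tau> True] by simp
  also have "\<dots> \<le> measure_pmf.prob (binomial_pmf M ?q) {c. real c / real M \<le> ?q - g}"
  proof (intro measure_pmf.finite_measure_mono subsetI)
    fix c assume "c \<in> {c. real c < \<tau> * real M}"
    then have "real c / real M < \<tau>"
      using assms(1) by (simp add: divide_less_eq)
    then show "c \<in> {c. real c / real M \<le> ?q - g}"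
      using assms(3) by simp
  qed simp
  also have "\<dots> \<le> exp (- 2 * real M * g\<^sup>2)"
    using binomial_distribution.prob_le'[of ?q M g] assms by (simp add: binomial_distribution_def pmf_le_1)
  finally show ?thesis .
qed

lemma prob_block_rejects_le:
  assumes "0 < M" "0 \<le> g" "pmf p True \<le> \<tau> - g"
  shows "measure_pmf.prob (replicate_pmf M p) {b. \<not> block_accepts \<tau> b} \<le> exp (- 2 * real M * g\<^sup>2)"
proof -
  let ?q = "pmf p True"
  have "measure_pmf.prob (replicate_pmf M p) {b. \<not> block_accepts \<tau> b} =
      measure_pmf.prob (binomial_pmf M ?q) {c. \<not> real c < \<tau> * real M}"
    using prob_block_accepts_eq[of M p \<tau> False] by simp
  also have "\<dots> \<le> measure_pmf.prob (binomial_pmf M ?q) {c. ?q + g \<le> real c / real M}"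
  proof (intro measure_pmf.finite_measure_mono subsetI)
    fix c assume "c \<in> {c. \<not> real c < \<tau> * real M}"
    then have "\<tau> \<le> real c / real M"
      using assms(1) by (simp add: le_divide_eq)
    then show "c \<in> {c. ?q + g \<le> real c / real M}"
      using assms(3) by simp
  qed simp
  also have "\<dots> \<le> exp (- 2 * real M * g\<^sup>2)"
    using binomial_distribution.prob_ge'[of ?q M g] assms by (simp add: binomial_distribution_def pmf_le_1)
  finally show ?thesis .
qed

locale staged_search =
  fixes Q :: "nat \<Rightarrow> bool pmf" and M J :: nat and \<tau> \<delta> :: real
    and out :: "nat \<Rightarrow> nat" and good :: "nat \<Rightarrow> bool" and js :: nat
  assumes M_pos: "0 < M" and js_le_J: "js \<le> J"
    and early_error: "\<And>j. j < js \<Longrightarrow> \<not> good (out j) \<Longrightarrow>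
      measure_pmf.prob (replicate_pmf M (Q j)) {b. block_accepts \<tau> b} \<le> \<delta>"
    and good_out_js: "good (out js)"
    and late_error: "measure_pmf.prob (replicate_pmf M (Q js)) {b. \<not> block_accepts \<tau> b} \<le> \<delta>"
begin

abbreviation rule :: "bool list \<Rightarrow> nat + nat" where
  "rule \<equiv> stage_rule M J \<tau> out"

abbreviation run :: "bool list \<times> nat option \<Rightarrow> nat \<Rightarrow> (bool list \<times> nat option) pmf" where
  "run \<equiv> outcome_run Q rule"

definition at_stage :: "nat \<Rightarrow> bool list \<Rightarrow> bool" where
  "at_stage j bs \<longleftrightarrow> j \<le> J \<and> length bs = j * M \<and> rule bs = Inr j"

definition succeeded :: "(bool list \<times> nat option) set" where
  "succeeded = {s. \<exists>kb. snd s = Some kb \<and> good kb}"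

lemma delta_nonneg: "0 \<le> \<delta>"
  using late_error by (rule order_trans[OF measure_nonneg])

lemma finite_set_block: "finite (set_pmf (replicate_pmf M (Q j)))"
  by (rule finite_set_replicate_pmf, rule finite)

lemma length_block: "b \<in> set_pmf (replicate_pmf M (Q j)) \<Longrightarrow> length b = M"
  by (simp add: set_replicate_pmf)

lemma at_stage_Nil: "at_stage 0 []"
  by (simp add: at_stage_def stage_rule_Nil)

lemma run_within_stage:
  assumes "at_stage j bs" "t \<le> M"
  shows "run (bs, None) t = map_pmf (\<lambda>b. (bs @ b, None)) (replicate_pmf t (Q j))"
proof (rule outcome_run_block)
  fix b :: "bool list" assume "length b < t"
  with assms M_pos show "rule (bs @ b) = Inr j"
    by (intro stage_rule_inside_block) (auto simp: at_stage_def)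
qed

lemma run_through_stage:
  assumes "at_stage j bs"
  shows "run (bs, None) (M + t) = bind_pmf (replicate_pmf M (Q j)) (\<lambda>b. run (bs @ b, None) t)"
  using run_within_stage[OF assms order.refl] by (simp add: outcome_run_add bind_map_pmf)

lemma run_after_accept:
  assumes "at_stage j bs" "length b = M" "block_accepts \<tau> b"
  shows "run (bs @ b, None) (Suc t) = return_pmf (bs @ b, Some (out j))"
  using assms M_pos by (intro outcome_run_output) (simp add: at_stage_def stage_rule_block_end)

lemma at_stage_after_reject:
  assumes "at_stage j bs" "length b = M" "\<not> block_accepts \<tau> b" "Suc j \<le> J"
  shows "at_stage (Suc j) (bs @ b)"
  using assms M_pos by (simp add: at_stage_def stage_rule_block_end)

lemma success_from_last_stage:
  assumes "at_stage js bs"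
  shows "1 - \<delta> \<le> measure_pmf.prob (run (bs, None) (M + 1)) succeeded"
proof -
  let ?F = "\<lambda>b. measure_pmf.prob (run (bs @ b, None) 1) succeeded"
  have "1 - measure_pmf.prob (replicate_pmf M (Q js)) {b. \<not> block_accepts \<tau> b}
      \<le> measure_pmf.expectation (replicate_pmf M (Q js)) ?F"
  proof (rule pmf_expectation_ge_minus_prob[OF finite_set_block])
    fix b assume b: "b \<in> set_pmf (replicate_pmf M (Q js))"
    show "1 - indicator {b. \<not> block_accepts \<tau> b} b \<le> ?F b"
      using run_after_accept[OF assms length_block[OF b], of 0] good_out_js
      by (cases "block_accepts \<tau> b") (auto simp: succeeded_def)
  qed
  moreover have "measure_pmf.prob (run (bs, None) (M + 1)) succeeded =
      measure_pmf.expectation (replicate_pmf M (Q js)) ?F"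
    by (simp only: run_through_stage[OF assms] measure_pmf_prob_bind)
  ultimately show ?thesis
    using late_error by linarith
qed

lemma success_from_stage:
  assumes "j \<le> js" "at_stage j bs"
  shows "1 - real (Suc (js - j)) * \<delta> \<le>
    measure_pmf.prob (run (bs, None) (Suc (js - j) * M + 1)) succeeded"
  using assms
proof (induction j arbitrary: bs rule: inc_induct)
  case base
  then show ?case
    using success_from_last_stage by simp
next
  case (step j)
  let ?T = "Suc (js - Suc j) * M + 1"
  let ?a = "1 - real (Suc (js - Suc j)) * \<delta>"
  let ?F = "\<lambda>b. measure_pmf.prob (run (bs @ b, None) ?T) succeeded"
  let ?bad = "{b. block_accepts \<tau> b \<and> \<not> good (out j)}"
  have lower: "?a - measure_pmf.prob (replicate_pmf M (Q j)) ?bad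
      \<le> measure_pmf.expectation (replicate_pmf M (Q j)) ?F"
  proof (rule pmf_expectation_ge_minus_prob[OF finite_set_block])
    fix b assume b: "b \<in> set_pmf (replicate_pmf M (Q j))"
    show "?a - indicator ?bad b \<le> ?F b"
    proof (cases "block_accepts \<tau> b")
      case True
      have "run (bs @ b, None) ?T = return_pmf (bs @ b, Some (out j))"
        using run_after_accept[OF step.prems length_block[OF b] True] by simp
      then show ?thesis
        using True delta_nonneg by (auto simp: succeeded_def indicator_def)
    next
      case False
      have "at_stage (Suc j) (bs @ b)"
        using at_stage_after_reject[OF step.prems length_block[OF b] False] step.hyps js_le_J by simp
      with False show ?thesis using step.IH by simp
    qed
  qed
  have bad: "measure_pmf.prob (replicate_pmf M (Q j)) ?bad \<le> \<delta>"
    using early_error[OF step.hyps(2)] delta_nonneg by (cases "good (out j)") simp_all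
  have remaining: "js - j = Suc (js - Suc j)"
    using step.hyps by simp
  then have "Suc (js - j) * M + 1 = M + ?T"
    by simp
  then have "measure_pmf.prob (run (bs, None) (Suc (js - j) * M + 1)) succeeded =
      measure_pmf.expectation (replicate_pmf M (Q j)) ?F"
    by (simp only: run_through_stage[OF step.prems] measure_pmf_prob_bind)
  moreover have "real (Suc (js - j)) * \<delta> = real (Suc (js - Suc j)) * \<delta> + \<delta>"
    by (simp add: remaining algebra_simps)
  ultimately show ?case
    using lower bad by linarith
qed

abbreviation tests :: "bool list \<times> nat option \<Rightarrow> real" where
  "tests s \<equiv> real (length (fst s))"

lemma length_run_le:
  assumes "length (fst s0) \<le> Suc J * M" "s \<in> set_pmf (run s0 t)"
  shows "length (fst s) \<le> Suc J * M"
  using stage_rule_Inr_length[OF M_pos] assms by (rule outcome_run_length_le)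

lemma expected_tests_le_max:
  assumes "length (fst s0) \<le> Suc J * M"
  shows "measure_pmf.expectation (run s0 t) tests \<le> real (Suc J * M)"
proof (rule pmf_expectation_le_const[OF finite_set_outcome_run])
  fix s assume "s \<in> set_pmf (run s0 t)"
  then show "tests s \<le> real (Suc J * M)"
    using length_run_le[OF assms] by (simp only: of_nat_le_iff)
qed

lemma expected_tests_within_stage:
  assumes "at_stage j bs" "t \<le> M"
  shows "measure_pmf.expectation (run (bs, None) t) tests = real (j * M + t)"
proof -
  have "measure_pmf.expectation (run (bs, None) t) tests =
      measure_pmf.expectation (replicate_pmf t (Q j)) (\<lambda>b. real (length (bs @ b)))"
    by (simp add: run_within_stage[OF assms])
  also have "\<dots> = measure_pmf.expectation (replicate_pmf t (Q j)) (\<lambda>_. real (j * M + t))"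
    using assms(1) by (intro integral_cong_AE AE_pmfI) (simp_all add: at_stage_def set_replicate_pmf)
  finally show ?thesis
    by simp
qed

lemma expected_tests_after_accept:
  assumes "at_stage j bs" "length b = M" "block_accepts \<tau> b"
  shows "measure_pmf.expectation (run (bs @ b, None) t) tests = real (Suc j * M)"
  using assms run_after_accept[OF assms] by (cases t) (simp_all add: at_stage_def)

lemma expected_tests_through_stage:
  assumes "at_stage j bs"
  shows "measure_pmf.expectation (run (bs, None) (M + t)) tests =
    measure_pmf.expectation (replicate_pmf M (Q j))
      (\<lambda>b. measure_pmf.expectation (run (bs @ b, None) t) tests)"
  unfolding run_through_stage[OF assms]
proof (rule expectation_bind_pmf)
  fix s assume "s \<in> set_pmf (bind_pmf (replicate_pmf M (Q j)) (\<lambda>b. run (bs @ b, None) t))"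
  then have "s \<in> set_pmf (run (bs, None) (M + t))"
    by (simp add: run_through_stage[OF assms])
  moreover have "length (fst (bs, None :: nat option)) \<le> Suc J * M"
    using assms by (simp add: at_stage_def mult_le_mono1 del: mult_Suc)
  ultimately show "\<bar>tests s\<bar> \<le> real (Suc J * M)"
    using length_run_le by (simp only: abs_of_nat of_nat_le_iff)
qed

lemma stage_tests_le_bound:
  assumes "j \<le> js"
  shows "real (Suc j * M) \<le> real (Suc js * M) + \<delta> * real (Suc J * M)"
proof -
  have "real (Suc j * M) \<le> real (Suc js * M)"
    using assms by (simp only: of_nat_le_iff) (intro mult_le_mono1, simp)
  moreover have "0 \<le> \<delta> * real (Suc J * M)"
    using delta_nonneg by simp
  ultimately show ?thesis
    by linarith
qed

lemma expected_tests_inside_stage_le: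
  assumes "j \<le> js" "at_stage j bs" "t \<le> M"
  shows "measure_pmf.expectation (run (bs, None) t) tests \<le> real (Suc js * M) + \<delta> * real (Suc J * M)"
  using expected_tests_within_stage[OF assms(2,3)] stage_tests_le_bound[OF assms(1)] assms(3) by simp

lemma expected_tests_from_last_stage:
  assumes "at_stage js bs"
  shows "measure_pmf.expectation (run (bs, None) t) tests \<le> real (Suc js * M) + \<delta> * real (Suc J * M)"
proof (cases "t \<le> M")
  case False
  let ?G = "\<lambda>b. measure_pmf.expectation (run (bs @ b, None) (t - M)) tests"
  have "measure_pmf.expectation (replicate_pmf M (Q js)) ?G \<le>
      real (Suc js * M) + real (Suc J * M) * measure_pmf.prob (replicate_pmf M (Q js)) {b. \<not> block_accepts \<tau> b}"
  proof (rule pmf_expectation_le_plus_prob[OF finite_set_block])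
    fix b assume b: "b \<in> set_pmf (replicate_pmf M (Q js))"
    show "?G b \<le> real (Suc js * M) + real (Suc J * M) * indicator {b. \<not> block_accepts \<tau> b} b"
    proof (cases "block_accepts \<tau> b")
      case True
      then show ?thesis
        using expected_tests_after_accept[OF assms length_block[OF b] True] by simp
    next
      case False
      have "length (bs @ b) \<le> Suc J * M"
        using assms js_le_J length_block[OF b] mult_le_mono1[of "Suc js" "Suc J" M]
        by (simp add: at_stage_def)
      then have "?G b \<le> real (Suc J * M)"
        by (intro expected_tests_le_max) simp
      moreover have "indicator {b. \<not> block_accepts \<tau> b} b = (1::real)"
        using False by simp
      moreover have "0 \<le> real (Suc js * M)"
        by (rule of_nat_0_le_iff)
      ultimately show ?thesis
        by (metis add_increasing mult_1_right)
    qed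
  qed
  moreover have "measure_pmf.expectation (run (bs, None) t) tests =
      measure_pmf.expectation (replicate_pmf M (Q js)) ?G"
    using expected_tests_through_stage[OF assms, of "t - M"] False by simp
  ultimately have "measure_pmf.expectation (run (bs, None) t) tests \<le>
      real (Suc js * M) + real (Suc J * M) * measure_pmf.prob (replicate_pmf M (Q js)) {b. \<not> block_accepts \<tau> b}"
    by simp
  also have "\<dots> \<le> real (Suc js * M) + \<delta> * real (Suc J * M)"
    using mult_left_mono[OF late_error of_nat_0_le_iff[of "Suc J * M"]] by (simp add: mult.commute)
  finally show ?thesis .
qed (use expected_tests_inside_stage_le[OF order.refl assms] in simp)

lemma expected_tests_from_stage:
  assumes "j \<le> js" "at_stage j bs"
  shows "measure_pmf.expectation (run (bs, None) t) tests \<le> real (Suc js * M) + \<delta> * real (Suc J * M)"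
  using assms
proof (induction j arbitrary: bs t rule: inc_induct)
  case base
  then show ?case
    by (rule expected_tests_from_last_stage)
next
  case (step j)
  let ?R = "real (Suc js * M) + \<delta> * real (Suc J * M)"
  let ?G = "\<lambda>b. measure_pmf.expectation (run (bs @ b, None) (t - M)) tests"
  show ?case
  proof (cases "t \<le> M")
    case False
    have "measure_pmf.expectation (replicate_pmf M (Q j)) ?G \<le> ?R"
    proof (rule pmf_expectation_le_const[OF finite_set_block])
      fix b assume b: "b \<in> set_pmf (replicate_pmf M (Q j))"
      show "?G b \<le> ?R"
      proof (cases "block_accepts \<tau> b")
        case True
        then show ?thesis
          using expected_tests_after_accept[OF step.prems length_block[OF b]]
            stage_tests_le_bound[of j] step.hyps by simp
      next
        case False
        have "at_stage (Suc j) (bs @ b)"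
          using at_stage_after_reject[OF step.prems length_block[OF b] False] step.hyps js_le_J by simp
        then show ?thesis by (rule step.IH)
      qed
    qed
    moreover have "measure_pmf.expectation (run (bs, None) t) tests =
        measure_pmf.expectation (replicate_pmf M (Q j)) ?G"
      using expected_tests_through_stage[OF step.prems, of "t - M"] False by simp
    ultimately show ?thesis
      by linarith
  next
    case True
    then show ?thesis
      using expected_tests_inside_stage_le[OF _ step.prems] step.hyps by simp
  qed
qed

theorem success_prob:
  "1 - real (Suc js) * \<delta> \<le> measure_pmf.prob (run ([], None) (Suc js * M + 1)) succeeded"
  using success_from_stage[OF _ at_stage_Nil] by simp

theorem expected_tests:
  "measure_pmf.expectation (run ([], None) t) tests \<le> real (Suc js * M) + \<delta> * real (Suc J * M)"
  using expected_tests_from_stage[OF _ at_stage_Nil] by simp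

end

section \<open>Random pools\<close>

definition random_pool :: "nat \<Rightarrow> real \<Rightarrow> nat set pmf" where
  "random_pool n p = map_pmf (\<lambda>f. {i. i < n \<and> f i}) (Pi_pmf {..<n} False (\<lambda>_. bernoulli_pmf p))"

lemma prob_random_pool_misses:
  assumes "K \<subseteq> {..<n}" "0 \<le> p" "p \<le> 1"
  shows "measure_pmf.prob (random_pool n p) {S. S \<inter> K = {}} = (1 - p) ^ card K"
proof -
  define B where "B i = (if i \<in> K then {False} else UNIV)" for i :: nat
  have "(\<lambda>f. {i. i < n \<and> f i}) -` {S. S \<inter> K = {}} = Pi {..<n} B"
    using assms(1) by (auto simp: B_def Pi_def)
  then have "measure_pmf.prob (random_pool n p) {S. S \<inter> K = {}} =
      (\<Prod>i<n. measure_pmf.prob (bernoulli_pmf p) (B i))"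
    by (simp add: random_pool_def measure_Pi_pmf_Pi)
  also have "\<dots> = (\<Prod>i<n. if i \<in> K then 1 - p else 1)"
    using assms(2,3) by (intro prod.cong) (auto simp: B_def measure_pmf_single)
  also have "\<dots> = (1 - p) ^ card K"
    using assms(1) by (simp add: prod.If_cases Int_absorb1)
  finally show ?thesis .
qed

lemma pmf_outcome_pmf_True:
  assumes "0 \<le> \<rho>" "\<rho> \<le> 1"
  shows "pmf (outcome_pmf \<rho> K P) True = \<rho> + (1 - 2 * \<rho>) * measure_pmf.prob P {S. S \<inter> K \<noteq> {}}"
proof -
  have pointwise: "pmf (map_pmf (\<lambda>z. (S \<inter> K \<noteq> {}) \<noteq> z) (bernoulli_pmf \<rho>)) True =
      \<rho> + (1 - 2 * \<rho>) * indicator {S. S \<inter> K \<noteq> {}} S" for S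
  proof -
    have "(\<lambda>z. (S \<inter> K \<noteq> {}) \<noteq> z) -` {True} = {S \<inter> K = {}}"
      by auto
    then show ?thesis
      using assms by (simp add: pmf_map measure_pmf_single indicator_def)
  qed
  have "pmf (outcome_pmf \<rho> K P) True =
      measure_pmf.expectation P (\<lambda>S. \<rho> + (1 - 2 * \<rho>) * indicator {S. S \<inter> K \<noteq> {}} S)"
    unfolding outcome_pmf_def pmf_bind pointwise ..
  also have "\<dots> = \<rho> + (1 - 2 * \<rho>) * measure_pmf.prob P {S. S \<inter> K \<noteq> {}}"
    by (simp add: measure_pmf.integrable_const_bound[where B=1])
  finally show ?thesis .
qed

definition positive_rate :: "real \<Rightarrow> real \<Rightarrow> real" where
  "positive_rate \<rho> x = \<rho> + (1 - 2 * \<rho>) * (1 - 2 powr (- x))"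

definition inclusion_prob :: "real \<Rightarrow> real" where
  "inclusion_prob y = 1 - 2 powr (- (1 / y))"

lemma pmf_outcome_random_pool:
  assumes "K \<subseteq> {..<n}" "0 \<le> \<rho>" "\<rho> \<le> 1" "0 < y"
  shows "pmf (outcome_pmf \<rho> K (random_pool n (inclusion_prob y))) True = positive_rate \<rho> (card K / y)"
proof -
  have "2 powr (- (1 / y)) \<le> 2 powr 0"
    using assms(4) by (intro powr_mono) auto
  then have p: "0 \<le> inclusion_prob y" "inclusion_prob y \<le> 1"
    by (simp_all add: inclusion_prob_def)
  have "(1 - inclusion_prob y) ^ card K = 2 powr (real (card K) * (- (1 / y)))"
    unfolding inclusion_prob_def by (simp add: powr_power)
  then have misses: "(1 - inclusion_prob y) ^ card K = 2 powr (- (card K / y))"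
    by simp
  have "measure_pmf.prob (random_pool n (inclusion_prob y)) {S. S \<inter> K \<noteq> {}} =
      1 - measure_pmf.prob (random_pool n (inclusion_prob y)) {S. S \<inter> K = {}}"
    using measure_pmf.prob_compl[of "{S. S \<inter> K = {}}"] by (simp add: Compl_eq_Diff_UNIV[symmetric] Collect_neg_eq)
  then show ?thesis
    using assms p misses by (simp add: pmf_outcome_pmf_True prob_random_pool_misses positive_rate_def)
qed

lemma positive_rate_mono:
  assumes "\<rho> \<le> 1 / 2" "x \<le> x'"
  shows "positive_rate \<rho> x \<le> positive_rate \<rho> x'"
  using assms unfolding positive_rate_def by (intro add_left_mono mult_left_mono) auto

lemma positive_rate_strict_mono:
  assumes "\<rho> < 1 / 2" "x < x'"
  shows "positive_rate \<rho> x < positive_rate \<rho> x'"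
  using assms unfolding positive_rate_def by (intro add_strict_left_mono mult_strict_left_mono) auto

section \<open>Geometrically spaced stages\<close>

lemma geometric_output_good:
  fixes r \<alpha> \<epsilon> :: real and k j :: nat
  assumes "1 < r" "0 \<le> \<epsilon>" "(1 - \<epsilon>) * r \<le> \<alpha>" "1 \<le> k" "real k \<le> r ^ j"
    and "0 < j \<Longrightarrow> \<alpha> * r ^ (j - 1) < real k"
  shows "(1 - \<epsilon>) * real (nat \<lfloor>r ^ j\<rfloor>) \<le> real k \<and> k \<le> nat \<lfloor>r ^ j\<rfloor>"
proof
  have "(1 - \<epsilon>) * r ^ j \<le> real k"
  proof (cases j)
    case 0
    then show ?thesis using assms(2,4) by simp
  next
    case (Suc i)
    have "(1 - \<epsilon>) * r ^ j = ((1 - \<epsilon>) * r) * r ^ i"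
      using Suc by simp
    also have "\<dots> \<le> \<alpha> * r ^ i"
      using assms(1,3) by (intro mult_right_mono) auto
    also have "\<dots> < real k"
      using assms(6) Suc by simp
    finally show ?thesis by simp
  qed
  then show "(1 - \<epsilon>) * real (nat \<lfloor>r ^ j\<rfloor>) \<le> real k"
  proof (cases "\<epsilon> \<le> 1")
    case True
    have "(1 - \<epsilon>) * real (nat \<lfloor>r ^ j\<rfloor>) \<le> (1 - \<epsilon>) * r ^ j"
      using True assms(1) by (intro mult_left_mono) (simp_all add: of_nat_floor)
    with \<open>(1 - \<epsilon>) * r ^ j \<le> real k\<close> show ?thesis
      by linarith
  next
    case False
    then have "(1 - \<epsilon>) * real (nat \<lfloor>r ^ j\<rfloor>) \<le> 0"
      by (intro mult_nonpos_nonneg) simp_all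
    then show ?thesis
      by simp
  qed
  show "k \<le> nat \<lfloor>r ^ j\<rfloor>"
    using assms(5) by (simp add: le_nat_floor)
qed

lemma staged_search_geometric:
  fixes Q :: "nat \<Rightarrow> bool pmf" and r \<alpha> \<epsilon> \<tau> g :: real and k M J :: nat
  assumes "0 < M" "1 < r" "0 < \<alpha>" "\<alpha> \<le> 1" "0 \<le> \<epsilon>" "(1 - \<epsilon>) * r \<le> \<alpha>" "1 \<le> k"
    and "real k \<le> \<alpha> * r ^ J" "0 \<le> g"
    and below: "\<And>j. r ^ j < real k \<Longrightarrow> \<tau> + g \<le> pmf (Q j) True"
    and above: "\<And>j. real k \<le> \<alpha> * r ^ j \<Longrightarrow> pmf (Q j) True \<le> \<tau> - g"
  shows "staged_search Q M J \<tau> (exp (- 2 * real M * g\<^sup>2)) (\<lambda>j. nat \<lfloor>r ^ j\<rfloor>)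
     (\<lambda>kb. (1 - \<epsilon>) * real kb \<le> real k \<and> k \<le> kb) (LEAST j. real k \<le> \<alpha> * r ^ j)"
proof -
  define js where "js = (LEAST j. real k \<le> \<alpha> * r ^ j)"
  have js: "real k \<le> \<alpha> * r ^ js"
    unfolding js_def using assms(8) by (rule LeastI)
  have before_js: "\<alpha> * r ^ i < real k" if "i < js" for i
    using not_less_Least[OF that[unfolded js_def]] by simp
  have good: "(1 - \<epsilon>) * real (nat \<lfloor>r ^ j\<rfloor>) \<le> real k \<and> k \<le> nat \<lfloor>r ^ j\<rfloor>"
    if "j \<le> js" "real k \<le> r ^ j" for j
  proof (rule geometric_output_good[OF assms(2,5,6,7) that(2)])
    assume "0 < j"
    then show "\<alpha> * r ^ (j - 1) < real k"
      using before_js[of "j - 1"] that(1) by simp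
  qed
  have "\<alpha> * r ^ js \<le> r ^ js"
    using assms(2,3,4) by (intro mult_left_le_one_le) auto
  with js have "real k \<le> r ^ js"
    by linarith
  show ?thesis
    unfolding js_def[symmetric]
  proof
    show "js \<le> J"
      unfolding js_def using assms(8) by (rule Least_le)
    show "(1 - \<epsilon>) * real (nat \<lfloor>r ^ js\<rfloor>) \<le> real k \<and> k \<le> nat \<lfloor>r ^ js\<rfloor>"
      using good[OF order.refl \<open>real k \<le> r ^ js\<close>] .
    show "measure_pmf.prob (replicate_pmf M (Q js)) {b. \<not> block_accepts \<tau> b} \<le> exp (- 2 * real M * g\<^sup>2)"
      using assms(1,9) above[OF js] by (rule prob_block_rejects_le)
    fix j assume "j < js" "\<not> ((1 - \<epsilon>) * real (nat \<lfloor>r ^ j\<rfloor>) \<le> real k \<and> k \<le> nat \<lfloor>r ^ j\<rfloor>)"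
    then have "r ^ j < real k"
      using good[of j] by (meson less_imp_le not_le)
    then show "measure_pmf.prob (replicate_pmf M (Q j)) {b. block_accepts \<tau> b} \<le> exp (- 2 * real M * g\<^sup>2)"
      using assms(1,9) below by (intro prob_block_accepts_le) auto
  qed (use assms(1) in simp)
qed

definition geometric_estimator :: "nat \<Rightarrow> nat \<Rightarrow> real \<Rightarrow> real \<Rightarrow> nat \<Rightarrow> gt_algo" where
  "geometric_estimator M J \<tau> r n =
     pooled_algo (stage_rule M J \<tau> (\<lambda>j. nat \<lfloor>r ^ j\<rfloor>)) (\<lambda>j. random_pool n (inclusion_prob (r ^ j)))"

lemma geometric_estimator_bounds:
  fixes \<rho> r \<alpha> \<epsilon> :: real and n M J :: nat and K :: "nat set"
  assumes "0 \<le> \<rho>" "\<rho> < 1 / 2" "0 < M" "1 < r" "0 < \<alpha>" "\<alpha> < 1" "0 \<le> \<epsilon>" "(1 - \<epsilon>) * r \<le> \<alpha>"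
    and "real n \<le> \<alpha> * r ^ J" "K \<subseteq> {..<n}" "K \<noteq> {}"
  defines "\<tau> \<equiv> (positive_rate \<rho> 1 + positive_rate \<rho> \<alpha>) / 2"
    and "g \<equiv> (positive_rate \<rho> 1 - positive_rate \<rho> \<alpha>) / 2"
    and "js \<equiv> LEAST j. real (card K) \<le> \<alpha> * r ^ j"
  shows "1 - real (Suc js) * exp (- 2 * real M * g\<^sup>2) \<le> gt_success_prob \<rho> K (geometric_estimator M J \<tau> r n)
           (\<lambda>kb. (1 - \<epsilon>) * real kb \<le> real (card K) \<and> card K \<le> kb)"
    and "gt_tests_upto \<rho> K (geometric_estimator M J \<tau> r n) t
           \<le> real (Suc js * M) + exp (- 2 * real M * g\<^sup>2) * real (Suc J * M)"
    and "js \<le> J"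
proof -
  define Q where "Q j = outcome_pmf \<rho> K (random_pool n (inclusion_prob (r ^ j)))" for j
  have k: "1 \<le> card K" "card K \<le> n"
    using assms(10,11) finite_subset[OF assms(10)] card_mono[OF _ assms(10)]
    by (auto simp: Suc_le_eq card_gt_0_iff)
  have pmf_Q: "pmf (Q j) True = positive_rate \<rho> (card K / r ^ j)" for j
    unfolding Q_def using assms(1,2,4,10) by (intro pmf_outcome_random_pool) auto
  have tau_g: "\<tau> + g = positive_rate \<rho> 1" "\<tau> - g = positive_rate \<rho> \<alpha>"
    by (simp_all add: \<tau>_def g_def field_simps)
  have g: "0 \<le> g"
    using positive_rate_strict_mono[OF assms(2) assms(6)] by (simp add: g_def)
  interpret staged_search Q M J \<tau> "exp (- 2 * real M * g\<^sup>2)" "\<lambda>j. nat \<lfloor>r ^ j\<rfloor>"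
    "\<lambda>kb. (1 - \<epsilon>) * real kb \<le> real (card K) \<and> card K \<le> kb" js
    unfolding js_def
  proof (rule staged_search_geometric)
    show "real (card K) \<le> \<alpha> * r ^ J"
      using k(2) assms(9) by linarith
    show "\<tau> + g \<le> pmf (Q j) True" if "r ^ j < real (card K)" for j
    proof -
      have "1 \<le> real (card K) / r ^ j"
        using that assms(4) by simp
      then have "positive_rate \<rho> 1 \<le> positive_rate \<rho> (real (card K) / r ^ j)"
        using assms(2) by (intro positive_rate_mono) auto
      then show ?thesis
        unfolding pmf_Q tau_g .
    qed
    show "pmf (Q j) True \<le> \<tau> - g" if "real (card K) \<le> \<alpha> * r ^ j" for j
      unfolding pmf_Q tau_g
      using that assms(2,4) by (intro positive_rate_mono) (simp_all add: divide_le_eq mult.commute)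
  qed (use assms k g in auto)
  show "1 - real (Suc js) * exp (- 2 * real M * g\<^sup>2) \<le> gt_success_prob \<rho> K (geometric_estimator M J \<tau> r n)
      (\<lambda>kb. (1 - \<epsilon>) * real kb \<le> real (card K) \<and> card K \<le> kb)"
    using success_prob gt_success_prob_pooled_algo_ge[of \<rho> K]
    unfolding geometric_estimator_def succeeded_def Q_def by (rule order_trans)
  show "gt_tests_upto \<rho> K (geometric_estimator M J \<tau> r n) t
      \<le> real (Suc js * M) + exp (- 2 * real M * g\<^sup>2) * real (Suc J * M)"
    using expected_tests unfolding geometric_estimator_def gt_tests_upto_pooled_algo Q_def .
  show "js \<le> J"
    by (rule js_le_J)
qed

lemma le_power_nat_ceiling_log:
  assumes "1 < r" "0 < y"
  shows "y \<le> r ^ nat \<lceil>log r y\<rceil>"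
proof -
  have "y = r powr log r y"
    using assms by simp
  also have "\<dots> \<le> r powr real (nat \<lceil>log r y\<rceil>)"
    using assms(1) by (intro powr_mono) linarith+
  also have "\<dots> = r ^ nat \<lceil>log r y\<rceil>"
    using assms(1) by (simp add: powr_realpow)
  finally show ?thesis .
qed

lemma Suc_nat_ceiling_log_le:
  assumes "1 < r" "1 \<le> y"
  shows "real (Suc (nat \<lceil>log r y\<rceil>)) \<le> log r y + 2"
proof -
  have "0 \<le> log r y"
    using assms by simp
  then show ?thesis
    by linarith
qed

lemma Suc_nat_ceiling_log_le_linear:
  assumes "1 < r" "0 < \<alpha>" "\<alpha> \<le> 1" "1 \<le> x"
  shows "real (Suc (nat \<lceil>log r (x / \<alpha>)\<rceil>)) \<le> (2 + 1 / (\<alpha> * ln r)) * x"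
proof -
  have x\<alpha>: "1 \<le> x / \<alpha>"
    using assms by (simp add: le_divide_eq)
  have "ln (x / \<alpha>) \<le> x / \<alpha>"
    using ln_le_minus_one[of "x / \<alpha>"] x\<alpha> by linarith
  then have "log r (x / \<alpha>) \<le> (x / \<alpha>) / ln r"
    unfolding log_def using assms(1) by (intro divide_right_mono) auto
  moreover have "2 \<le> 2 * x"
    using assms(4) by simp
  ultimately show ?thesis
    using Suc_nat_ceiling_log_le[OF assms(1) x\<alpha>] by (simp add: algebra_simps)
qed

lemma Suc_nat_ceiling_log_le_ln:
  assumes "1 < r" "0 < \<alpha>" "\<alpha> \<le> 1" "1 \<le> x"
  shows "real (Suc (nat \<lceil>log r (x / \<alpha>)\<rceil>)) \<le> (1 / ln r + (2 - ln \<alpha> / ln r) / ln 2) * ln (x + 1)"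
proof -
  have x\<alpha>: "1 \<le> x / \<alpha>"
    using assms by (simp add: le_divide_eq)
  have lnr: "0 < ln r"
    using assms(1) by simp
  have "log r (x / \<alpha>) = ln x / ln r - ln \<alpha> / ln r"
    using assms by (simp add: log_def ln_div diff_divide_distrib)
  also have "\<dots> \<le> ln (x + 1) / ln r - ln \<alpha> / ln r"
    using assms lnr by (simp add: divide_right_mono)
  finally have "real (Suc (nat \<lceil>log r (x / \<alpha>)\<rceil>)) \<le> ln (x + 1) / ln r + (2 - ln \<alpha> / ln r)"
    using Suc_nat_ceiling_log_le[OF assms(1) x\<alpha>] by linarith
  also have "\<dots> \<le> ln (x + 1) / ln r + (2 - ln \<alpha> / ln r) * (ln (x + 1) / ln 2)"
  proof -
    have "ln \<alpha> \<le> 0"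
      using assms(2,3) by simp
    then have "0 \<le> 2 - ln \<alpha> / ln r"
      using divide_nonpos_pos[OF _ lnr] by fastforce
    moreover have "1 \<le> ln (x + 1) / ln 2"
      using assms(4) by simp
    ultimately show ?thesis
      using mult_left_mono[of 1 "ln (x + 1) / ln 2" "2 - ln \<alpha> / ln r"] by simp
  qed
  also have "\<dots> = (1 / ln r + (2 - ln \<alpha> / ln r) / ln 2) * ln (x + 1)"
    by (simp add: algebra_simps)
  finally show ?thesis .
qed

lemma nat_ceiling_mult_ln_bounds:
  fixes B :: real and n :: nat
  assumes "0 < B" "2 \<le> n"
  shows "B * ln (real n) \<le> real (nat \<lceil>B * ln (real n)\<rceil>)"
    and "real (nat \<lceil>B * ln (real n)\<rceil>) \<le> (B + 1 / ln 2) * ln (real n)"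
    and "0 < nat \<lceil>B * ln (real n)\<rceil>"
proof -
  have ln_n: "ln 2 \<le> ln (real n)"
    using assms(2) by simp
  then have pos: "0 < B * ln (real n)"
    using assms(1) ln_gt_zero[of 2] by (intro mult_pos_pos) linarith+
  then show "B * ln (real n) \<le> real (nat \<lceil>B * ln (real n)\<rceil>)" "0 < nat \<lceil>B * ln (real n)\<rceil>"
    by linarith+
  have "1 \<le> ln (real n) / ln 2"
    using ln_n by simp
  moreover have "real (nat \<lceil>B * ln (real n)\<rceil>) = real_of_int \<lceil>B * ln (real n)\<rceil>"
    using pos by simp
  moreover have "(B + 1 / ln 2) * ln (real n) = B * ln (real n) + ln (real n) / ln 2"
    by (simp add: algebra_simps)
  ultimately show "real (nat \<lceil>B * ln (real n)\<rceil>) \<le> (B + 1 / ln 2) * ln (real n)"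
    using of_int_ceiling_le_add_one[of "B * ln (real n)"] by linarith
qed

lemma exp_neg_le_powr_neg:
  fixes x a b :: real
  assumes "0 < x" "a * ln x \<le> b"
  shows "exp (- b) \<le> x powr (- a)"
proof -
  have "x powr (- a) = exp (- (a * ln x))"
    using assms(1) by (simp add: powr_def)
  then show ?thesis
    using assms(2) by simp
qed

section \<open>Choice of the parameters\<close>

locale estimator_parameters =
  fixes \<rho> c \<epsilon> :: real
  assumes \<rho>: "0 < \<rho>" "\<rho> < 1 / 2" and c: "0 < c" and \<epsilon>: "0 < \<epsilon>" "\<epsilon> < 1"
begin

(* alpha < 1 separates the positive rates at k / r^j >= 1 from those at k / r^j <= alpha, and
   r = alpha / (1 - eps) makes floor (r^j) admissible as soon as alpha * r^(j - 1) < k <= r^j. *)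

definition \<alpha> :: real where "\<alpha> = 1 - \<epsilon> / 2"
definition r :: real where "r = \<alpha> / (1 - \<epsilon>)"
definition \<tau> :: real where "\<tau> = (positive_rate \<rho> 1 + positive_rate \<rho> \<alpha>) / 2"
definition g :: real where "g = (positive_rate \<rho> 1 - positive_rate \<rho> \<alpha>) / 2"
definition B :: real where "B = (c + 1) / (2 * g\<^sup>2)"

definition stage_length :: "nat \<Rightarrow> nat" where
  "stage_length n = nat \<lceil>B * ln (real n)\<rceil>"

definition last_stage :: "nat \<Rightarrow> nat" where
  "last_stage n = nat \<lceil>log r (real n / \<alpha>)\<rceil>"

definition estimator :: "nat \<Rightarrow> gt_algo" where
  "estimator n = geometric_estimator (stage_length n) (last_stage n) \<tau> r n"

definition C\<^sub>1 :: real where "C\<^sub>1 = 2 + 1 / (\<alpha> * ln r)"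
definition C\<^sub>2 :: real where "C\<^sub>2 = 1 / ln r + (2 - ln \<alpha> / ln r) / ln 2"
definition C\<^sub>3 :: real where "C\<^sub>3 = B + 1 / ln 2"
definition C :: real where "C = C\<^sub>1 + C\<^sub>3 * (C\<^sub>2 + C\<^sub>1 / ln 2)"

lemma \<alpha>: "0 < \<alpha>" "\<alpha> < 1"
  using \<epsilon> by (simp_all add: \<alpha>_def)

lemma r: "1 < r" "(1 - \<epsilon>) * r \<le> \<alpha>"
  using \<epsilon> by (simp_all add: r_def \<alpha>_def field_simps)

lemma g: "0 < g"
  using positive_rate_strict_mono[OF \<rho>(2) \<alpha>(2)] by (simp add: g_def)

lemma B: "0 < B"
  using g c by (simp add: B_def)

lemma constants_nonneg: "0 \<le> C\<^sub>1" "0 \<le> C\<^sub>2" "0 \<le> C\<^sub>3"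
proof -
  show "0 \<le> C\<^sub>1"
    using \<alpha> r by (simp add: C\<^sub>1_def)
  have "ln \<alpha> / ln r \<le> 0"
    using \<alpha> r by (intro divide_nonpos_pos) simp_all
  then show "0 \<le> C\<^sub>2"
    using r unfolding C\<^sub>2_def by (intro add_nonneg_nonneg divide_nonneg_pos) simp_all
  show "0 \<le> C\<^sub>3"
    using B by (simp add: C\<^sub>3_def)
qed

lemma C\<^sub>1_le_C: "C\<^sub>1 \<le> C"
  using constants_nonneg by (simp add: C_def)

lemma stage_length:
  assumes "2 \<le> n"
  shows "B * ln (real n) \<le> real (stage_length n)" "real (stage_length n) \<le> C\<^sub>3 * ln (real n)"
    and "0 < stage_length n"
  using nat_ceiling_mult_ln_bounds[OF B assms] unfolding stage_length_def C\<^sub>3_def by simp_all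

lemma last_stage:
  assumes "1 \<le> n"
  shows "real n \<le> \<alpha> * r ^ last_stage n" "real (Suc (last_stage n)) \<le> C\<^sub>1 * real n"
  using le_power_nat_ceiling_log[OF r(1), of "real n / \<alpha>"]
    Suc_nat_ceiling_log_le_linear[OF r(1) \<alpha>(1) _, of n] \<alpha> assms
  unfolding last_stage_def C\<^sub>1_def by (simp_all add: field_simps)

lemma error_bound:
  assumes "2 \<le> n"
  shows "real (Suc (last_stage n)) * exp (- 2 * real (stage_length n) * g\<^sup>2) \<le> C\<^sub>1 * real n powr (- c)"
proof -
  have "(c + 1) * ln (real n) = 2 * g\<^sup>2 * (B * ln (real n))"
    using g by (simp add: B_def)
  also have "\<dots> \<le> 2 * g\<^sup>2 * real (stage_length n)"
    using stage_length(1)[OF assms] by (intro mult_left_mono) simp_all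
  finally have "exp (- 2 * real (stage_length n) * g\<^sup>2) \<le> real n powr (- (c + 1))"
    using exp_neg_le_powr_neg[of n "c + 1" "2 * g\<^sup>2 * real (stage_length n)"] assms
    by (simp add: mult.commute mult.left_commute)
  then have "real (Suc (last_stage n)) * exp (- 2 * real (stage_length n) * g\<^sup>2)
      \<le> (C\<^sub>1 * real n) * real n powr (- (c + 1))"
    using last_stage(2) constants_nonneg assms by (intro mult_mono) simp_all
  also have "\<dots> = C\<^sub>1 * real n powr (- c)"
    using powr_add[of "real n" 1 "- (c + 1)"] assms by simp
  finally show ?thesis .
qed

lemma first_good_stage:
  assumes "1 \<le> k"
  shows "real (Suc (LEAST j. real k \<le> \<alpha> * r ^ j)) \<le> C\<^sub>2 * ln (real k + 1)"
proof -
  have "(LEAST j. real k \<le> \<alpha> * r ^ j) \<le> nat \<lceil>log r (real k / \<alpha>)\<rceil>"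
    using le_power_nat_ceiling_log[OF r(1), of "real k / \<alpha>"] \<alpha> assms
    by (intro Least_le) (simp add: field_simps)
  then show ?thesis
    using Suc_nat_ceiling_log_le_ln[OF r(1) \<alpha>(1) _, of k] \<alpha> assms unfolding C\<^sub>2_def by simp
qed

lemmas estimator_bounds = geometric_estimator_bounds[OF less_imp_le[OF \<rho>(1)] \<rho>(2) _ r(1) \<alpha>
    less_imp_le[OF \<epsilon>(1)] r(2), folded \<tau>_def g_def]

lemma estimator_success:
  assumes "2 \<le> n" "K \<subseteq> {..<n}" "K \<noteq> {}"
  shows "1 - C * real n powr (- c) \<le>
    gt_success_prob \<rho> K (estimator n) (\<lambda>kb. (1 - \<epsilon>) * real kb \<le> real (card K) \<and> card K \<le> kb)"
proof -
  let ?js = "LEAST j. real (card K) \<le> \<alpha> * r ^ j"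
  let ?\<delta> = "exp (- 2 * real (stage_length n) * g\<^sup>2)"
  have "1 \<le> n"
    using assms(1) by simp
  note bounds = estimator_bounds[OF stage_length(3)[OF assms(1)] last_stage(1)[OF this] assms(2,3),
    folded estimator_def]
  have "1 - C * real n powr (- c) \<le> 1 - C\<^sub>1 * real n powr (- c)"
    using C\<^sub>1_le_C by (simp add: mult_right_mono)
  also have "\<dots> \<le> 1 - real (Suc (last_stage n)) * ?\<delta>"
    using error_bound[OF assms(1)] by simp
  also have "\<dots> \<le> 1 - real (Suc ?js) * ?\<delta>"
    using bounds(3) by (simp add: mult_right_mono)
  also have "\<dots> \<le> gt_success_prob \<rho> K (estimator n) (\<lambda>kb. (1 - \<epsilon>) * real kb \<le> real (card K) \<and> card K \<le> kb)"
    by (rule bounds(1))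
  finally show ?thesis .
qed

lemma estimator_tests:
  assumes "2 \<le> n" "K \<subseteq> {..<n}" "K \<noteq> {}"
  shows "gt_tests_upto \<rho> K (estimator n) t \<le> C * ln (real (card K) + 1) * ln (real n)"
proof -
  let ?js = "LEAST j. real (card K) \<le> \<alpha> * r ^ j"
  let ?\<delta> = "exp (- 2 * real (stage_length n) * g\<^sup>2)"
  let ?L = "ln (real (card K) + 1)"
  have "1 \<le> n"
    using assms(1) by simp
  note bounds = estimator_bounds[OF stage_length(3)[OF assms(1)] last_stage(1)[OF this] assms(2,3),
    folded estimator_def]
  have k: "1 \<le> card K"
    using assms(2,3) finite_subset[OF assms(2)] by (auto simp: Suc_le_eq card_gt_0_iff)
  then have "C\<^sub>1 \<le> C\<^sub>1 * (?L / ln 2)"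
    using constants_nonneg by (intro mult_le_cancel_left1[THEN iffD2]) simp
  moreover have "C\<^sub>1 * real n powr (- c) \<le> C\<^sub>1"
    using powr_mono[of "- c" 0 "real n"] assms(1) c constants_nonneg by (intro mult_left_le) simp_all
  moreover have "(C\<^sub>2 + C\<^sub>1 / ln 2) * ?L = C\<^sub>2 * ?L + C\<^sub>1 * (?L / ln 2)"
    by (simp add: algebra_simps)
  ultimately have per_stage: "real (Suc ?js) + real (Suc (last_stage n)) * ?\<delta> \<le> (C\<^sub>2 + C\<^sub>1 / ln 2) * ?L"
    using first_good_stage[OF k] error_bound[OF assms(1)] by linarith
  have "gt_tests_upto \<rho> K (estimator n) t \<le> real (Suc ?js * stage_length n) + ?\<delta> * real (Suc (last_stage n) * stage_length n)"
    by (rule bounds(2))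
  also have "\<dots> = real (stage_length n) * (real (Suc ?js) + real (Suc (last_stage n)) * ?\<delta>)"
    by (simp add: algebra_simps)
  also have "\<dots> \<le> (C\<^sub>3 * ln (real n)) * ((C\<^sub>2 + C\<^sub>1 / ln 2) * ?L)"
    using stage_length(2)[OF assms(1)] per_stage by (intro mult_mono) simp_all
  also have "\<dots> \<le> C * ?L * ln (real n)"
    using constants_nonneg assms(1) by (simp add: C_def mult_right_mono algebra_simps)
  finally show ?thesis .
qed

theorem estimator_with_accuracy:
  "\<exists>A :: nat \<Rightarrow> gt_algo. \<exists>C :: real. \<forall>\<^sub>F n in sequentially.
     \<forall>K. K \<subseteq> {..<n} \<and> K \<noteq> {} \<longrightarrow>
       gt_success_prob \<rho> K (A n) (\<lambda>kb. (1 - \<epsilon>) * real kb \<le> real (card K) \<and> card K \<le> kb)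
         \<ge> 1 - C * real n powr (- c)
       \<and> (\<forall>t. gt_tests_upto \<rho> K (A n) t \<le> C * ln (real (card K) + 1) * ln (real n))"
  using estimator_success estimator_tests
  by (intro exI[of _ estimator] exI[of _ C] eventually_sequentiallyI[of 2]) blast

end

theorem lemma3:
  fixes \<rho> c :: real
  assumes "0 < \<rho>" "\<rho> < 1/2" "0 < c"
  shows "(\<exists>A :: nat \<Rightarrow> gt_algo. \<exists>C :: real. \<forall>\<^sub>F n in sequentially.
            \<forall>K. K \<subseteq> {..<n} \<and> K \<noteq> {} \<longrightarrow>
              gt_success_prob \<rho> K (A n)
                 (\<lambda>kb. real kb / 2 \<le> real (card K) \<and> card K \<le> kb)
                \<ge> 1 - C * real n powr (- c)
            \<and> (\<forall>t. gt_tests_upto \<rho> K (A n) t \<le> C * ln (real (card K) + 1) * ln (real n)))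
       \<and> (\<forall>\<epsilon>::real. 0 < \<epsilon> \<and> \<epsilon> < 1 \<longrightarrow>
          (\<exists>A :: nat \<Rightarrow> gt_algo. \<exists>C :: real. \<forall>\<^sub>F n in sequentially.
            \<forall>K. K \<subseteq> {..<n} \<and> K \<noteq> {} \<longrightarrow>
              gt_success_prob \<rho> K (A n)
                 (\<lambda>kb. (1 - \<epsilon>) * real kb \<le> real (card K) \<and> card K \<le> kb)
                \<ge> 1 - C * real n powr (- c)
            \<and> (\<forall>t. gt_tests_upto \<rho> K (A n) t \<le> C * ln (real (card K) + 1) * ln (real n))))"
proof -
  have half: "estimator_parameters \<rho> c (1 / 2)"
    using assms by unfold_locales simp_all
  have half_accuracy: "(\<lambda>kb. (1 - 1 / 2) * real kb \<le> real (card K) \<and> card K \<le> kb) =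
      (\<lambda>kb. real kb / 2 \<le> real (card K) \<and> card K \<le> kb)" for K :: "nat set"
    by auto
  show ?thesis
    using estimator_parameters.estimator_with_accuracy[OF half, unfolded half_accuracy]
      estimator_parameters.estimator_with_accuracy[OF estimator_parameters.intro[OF assms]]
    by blast
qed

end
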